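(* Let $K=\mathbb{F}_q$, $S=K[t_1,\ldots,t_s]$, and let $\mathcal{X}=[A_1\times\cdots\times A_s]\subset\mathbb{P}^{s-1}$ be a projective nested cartesian set with $d_i=|A_i|$. Let $\mathcal{L}_d$ be the $K$-vector space spanned by all monomials $t^a\in S_d$ divisible by $t_1$. If $1\leq d\leq\sum_{i=2}^s(d_i-1)$, then $$\max\{|V_{\mathcal{X}}(f)|: f\in\mathcal{L}_d,\ f\notin I(\mathcal{X})\}=\deg(S/I(\mathcal{X}))-(d_{k+2}-\ell+1)d_{k+3}\cdots d_s,$$ where $0\leq k\leq s-2$ and $\ell$ are the integers with $d=\sum_{i=2}^{k+1}(d_i-1)+\ell$ and $1\leq\ell\leq d_{k+2}-1$.
   Context: Projective nested cartesian set: for subsets $A_1,\ldots,A_s$ of $K$, $\mathcal{X}=[A_1\times\cdots\times A_s]$ is the image of $(A_1\times\cdots\times A_s)\setminus\{0\}$ under $K^s\setminus\{0\}\to\mathbb{P}^{s-1}$, $x\mapsto[x]$, and it is required that (i) $\{0,1\}\subset A_i$ for all $i$; (ii) $a/b\in A_j$ whenever $1\leq i<j\leq s$, $a\in A_j$, $0\neq b\in A_i$; (iii) $d_1\leq\cdots\leq d_s$ where $d_i=|A_i|$. $I(\mathcal{X})$ is the ideal generated by the homogeneous polynomials vanishing on $\mathcal{X}$; $V_{\mathcal{X}}(f)$ is the zero set of $f$ in $\mathcal{X}$. For a graded ideal $J$ with Hilbert function $H_J(d)=\dim_K(S_d/J_d)$ and $k=\dim(S/J)$, $\deg(S/J)=(k-1)!\lim_{d\to\infty}H_J(d)/d^{k-1}$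 if $k\geq1$ and $\dim_K(S/J)$ if $k=0$. *)

theory Defs
  imports "HOL-Analysis.Analysis" "HOL-Library.Function_Algebras"
begin

text \<open>Variables t_1,...,t_s are indexed 0,...,s-1 (t_1 is index 0).
  Monomials t^a are exponent vectors a :: nat => nat supported on {..<s};
  a homogeneous polynomial of degree d is its coefficient function, supported
  on the monomials of degree d.  Points of K^s are vectors nat => K supported on {..<s}.\<close>

definition exps_deg :: "nat \<Rightarrow> nat \<Rightarrow> (nat \<Rightarrow> nat) set" where
  "exps_deg s d = {a. (\<forall>i\<ge>s. a i = 0) \<and> (\<Sum>i<s. a i) = d}"

definition hpolys :: "nat \<Rightarrow> nat \<Rightarrow> ((nat \<Rightarrow> nat) \<Rightarrow> 'a::field) set" where
  "hpolys s d = {c. \<forall>a. a \<notin> exps_deg s d \<longrightarrow> c a = 0}"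

definition peval :: "nat \<Rightarrow> nat \<Rightarrow> ((nat \<Rightarrow> nat) \<Rightarrow> 'a::field) \<Rightarrow> (nat \<Rightarrow> 'a) \<Rightarrow> 'a" where
  "peval s d c x = (\<Sum>a\<in>exps_deg s d. c a * (\<Prod>i<s. x i ^ a i))"

definition Lspace :: "nat \<Rightarrow> nat \<Rightarrow> ((nat \<Rightarrow> nat) \<Rightarrow> 'a::field) set" where
  "Lspace s d = {c \<in> hpolys s d. \<forall>a. c a \<noteq> 0 \<longrightarrow> 1 \<le> a 0}"

definition projpt :: "(nat \<Rightarrow> 'a::field) \<Rightarrow> (nat \<Rightarrow> 'a) set" where
  "projpt x = {(\<lambda>i. c * x i) | c. c \<noteq> 0}"

definition proj_cart :: "nat \<Rightarrow> (nat \<Rightarrow> 'a::field set) \<Rightarrow> (nat \<Rightarrow> 'a) set set" where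
  "proj_cart s A = {projpt x | x. (\<forall>i<s. x i \<in> A i) \<and> (\<forall>i\<ge>s. x i = 0) \<and> (\<exists>i<s. x i \<noteq> 0)}"

definition proj_nested :: "nat \<Rightarrow> (nat \<Rightarrow> 'a::field set) \<Rightarrow> bool" where
  "proj_nested s A \<longleftrightarrow>
     (\<forall>i<s. {0, 1} \<subseteq> A i) \<and>
     (\<forall>i j a b. i < j \<and> j < s \<and> a \<in> A j \<and> b \<in> A i \<and> b \<noteq> 0 \<longrightarrow> a / b \<in> A j) \<and>
     (\<forall>i j. i \<le> j \<and> j < s \<longrightarrow> card (A i) \<le> card (A j))"

definition zero_set :: "nat \<Rightarrow> nat \<Rightarrow> (nat \<Rightarrow> 'a::field) set set \<Rightarrow> ((nat \<Rightarrow> nat) \<Rightarrow> 'a) \<Rightarrow> (nat \<Rightarrow> 'a) set set" where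
  "zero_set s d X f = {P \<in> X. \<forall>x\<in>P. peval s d f x = 0}"

text \<open>I(X)_d : the degree-d part of the vanishing ideal I(X) (generated by the
  homogeneous polynomials vanishing on X), i.e. the degree-d forms vanishing on X.\<close>
definition vanishing_ideal_hom :: "nat \<Rightarrow> nat \<Rightarrow> (nat \<Rightarrow> 'a::field) set set \<Rightarrow> ((nat \<Rightarrow> nat) \<Rightarrow> 'a) set" where
  "vanishing_ideal_hom s d X = {f \<in> hpolys s d. \<forall>P\<in>X. \<forall>x\<in>P. peval s d f x = 0}"

definition hilbert_fn :: "nat \<Rightarrow> (nat \<Rightarrow> 'a::field) set set \<Rightarrow> nat \<Rightarrow> nat" where
  "hilbert_fn s X d =
     vector_space.dim (\<lambda>(c::'a) f. \<lambda>a. c * f a) (hpolys s d)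
   - vector_space.dim (\<lambda>(c::'a) f. \<lambda>a. c * f a) (vanishing_ideal_hom s d X)"

text \<open>Degree from the Hilbert function: if H is eventually 0 (k = 0) it is the total
  dimension sum H; otherwise with e = k-1 the growth exponent of H (the unique e with
  H(d)/d^e tending to a positive limit), it is e! * lim H(d)/d^e.\<close>
definition hdeg :: "(nat \<Rightarrow> nat) \<Rightarrow> real" where
  "hdeg H = (if eventually (\<lambda>d. H d = 0) sequentially
     then real (\<Sum>d\<in>{d. H d \<noteq> 0}. H d)
     else (let e = (THE e. \<exists>L>0. (\<lambda>d. real (H d) / real d ^ e) \<longlonglongrightarrow> L)
           in fact e * lim (\<lambda>d. real (H d) / real d ^ e)))"

end

theory Submission
  imports Defs "HOL-Computational_Algebra.Polynomial"
begin

text \<open>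
  Every f in L_d vanishes on the hyperplane t_1 = 0, and by nestedness the points of
  X = [A_1 x ... x A_s] off that hyperplane are exactly the points [1 : y] with y in the grid
  A_2 x ... x A_s. Hence |V_X(f)| is |X| minus the number of grid points at which the
  dehomogenization f(1, y), a polynomial of degree at most d - 1, does not vanish. The footprint
  bound for polynomials on a grid (the minimum distance of affine cartesian codes) says that this
  number is at least (d_(k+2) - l + 1) d_(k+3) ... d_s, and the bound is attained by t_1 times a
  product of linear forms t_i - c t_1 that kill whole slabs of the grid. Finally
  deg S/I(X) = |X|, because in degrees above (s - 1)(q - 1) forms separate the points of X, so the
  Hilbert function is eventually the constant |X|.
\<close>

section \<open>Forms and their evaluation\<close>

lemma finite_exps_deg: "finite (exps_deg s d)"
proof -
  have "exps_deg s d \<subseteq> (\<lambda>f i. if i < s then f i else 0) ` ({..<s} \<rightarrow>\<^sub>E {..d})"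
  proof
    fix a assume a: "a \<in> exps_deg s d"
    have le: "a i \<le> d" if "i < s" for i
      using a that member_le_sum[of i "{..<s}" a] by (auto simp: exps_deg_def)
    show "a \<in> (\<lambda>f i. if i < s then f i else 0) ` ({..<s} \<rightarrow>\<^sub>E {..d})"
      by (rule image_eqI[where x="restrict a {..<s}"]) (use a le in \<open>auto simp: exps_deg_def fun_eq_iff\<close>)
  qed
  then show ?thesis
    by (rule finite_subset) (intro finite_imageI finite_PiE, auto)
qed

lemma exps_deg_0: "exps_deg s 0 = {\<lambda>_. 0}"
proof safe
  fix a assume a: "a \<in> exps_deg s 0"
  show "a = (\<lambda>_. 0)"
  proof
    fix i show "a i = 0"
      using a by (cases "i < s") (auto simp: exps_deg_def)
  qed
qed (auto simp: exps_deg_def)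

lemma exps_deg_decrement_iff:
  assumes "i < s" "1 \<le> a i"
  shows "a(i := a i - 1) \<in> exps_deg s d \<longleftrightarrow> a \<in> exps_deg s (Suc d)"
proof -
  have "(\<Sum>j<s. (a(i := a i - 1)) j) = a i - 1 + (\<Sum>j\<in>{..<s}-{i}. a j)"
    using assms by (simp add: sum.remove)
  moreover have "(\<Sum>j<s. a j) = a i + (\<Sum>j\<in>{..<s}-{i}. a j)"
    using assms by (simp add: sum.remove)
  ultimately show ?thesis
    using assms by (auto simp: exps_deg_def split: if_splits)
qed

lemma peval_add: "peval s d (\<lambda>a. f a + g a) x = peval s d f x + peval s d g x"
  by (simp add: peval_def distrib_right sum.distrib)

lemma peval_scale: "peval s d (\<lambda>a. k * f a) x = k * peval s d f x"
  by (simp add: peval_def sum_distrib_left mult.assoc)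

lemma peval_homogeneous: "peval s d c (\<lambda>i. k * x i) = k ^ d * peval s d c x"
  unfolding peval_def sum_distrib_left
proof (rule sum.cong[OF refl])
  fix a assume a: "a \<in> exps_deg s d"
  have "(\<Prod>i<s. (k * x i) ^ a i) = k ^ (\<Sum>i<s. a i) * (\<Prod>i<s. x i ^ a i)"
    by (simp add: power_mult_distrib prod.distrib power_sum)
  then show "c a * (\<Prod>i<s. (k * x i) ^ a i) = k ^ d * (c a * (\<Prod>i<s. x i ^ a i))"
    using a by (simp add: exps_deg_def)
qed

definition lin_form :: "nat \<Rightarrow> (nat \<Rightarrow> 'a::field) \<Rightarrow> (nat \<Rightarrow> 'a) \<Rightarrow> 'a" where
  "lin_form s L x = (\<Sum>i<s. L i * x i)"

definition lin_form_mult :: "nat \<Rightarrow> (nat \<Rightarrow> 'a::field) \<Rightarrow> ((nat \<Rightarrow> nat) \<Rightarrow> 'a) \<Rightarrow> (nat \<Rightarrow> nat) \<Rightarrow> 'a" where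
  "lin_form_mult s L c = (\<lambda>a. \<Sum>i<s. if 1 \<le> a i then L i * c (a(i := a i - 1)) else 0)"

lemma lin_form_mult_hpolys:
  assumes "c \<in> hpolys s d"
  shows "lin_form_mult s L c \<in> hpolys s (Suc d)"
proof -
  have "lin_form_mult s L c a = 0" if a: "a \<notin> exps_deg s (Suc d)" for a
    unfolding lin_form_mult_def
  proof (rule sum.neutral, rule ballI)
    fix i assume "i \<in> {..<s}"
    then show "(if 1 \<le> a i then L i * c (a(i := a i - 1)) else 0) = 0"
      using assms a exps_deg_decrement_iff[of i s a d] by (auto simp: hpolys_def)
  qed
  then show ?thesis
    by (simp add: hpolys_def)
qed

lemma lin_form_mult_nonzero:
  assumes "lin_form_mult s L c a \<noteq> 0"
  obtains i where "i < s" "1 \<le> a i" "L i \<noteq> 0"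
proof -
  from assms obtain i where "i \<in> {..<s}" "(if 1 \<le> a i then L i * c (a(i := a i - 1)) else 0) \<noteq> 0"
    unfolding lin_form_mult_def using sum.not_neutral_contains_not_neutral by blast
  then show ?thesis
    using that by (auto split: if_splits)
qed

lemma lin_form_mult_Lspace:
  assumes "c \<in> hpolys s d" "\<And>i. i \<noteq> 0 \<Longrightarrow> L i = 0"
  shows "lin_form_mult s L c \<in> Lspace s (Suc d)"
proof -
  have "1 \<le> a 0" if nz: "lin_form_mult s L c a \<noteq> 0" for a
  proof -
    obtain i where "1 \<le> a i" "L i \<noteq> 0"
      using lin_form_mult_nonzero[OF nz] by blast
    then show ?thesis
      using assms(2) by (cases "i = 0") auto
  qed
  then show ?thesis
    using lin_form_mult_hpolys[OF assms(1)] by (simp add: Lspace_def)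
qed

lemma sum_exps_deg_Suc_shift:
  fixes x :: "nat \<Rightarrow> 'a::comm_semiring_1"
  assumes "i < s"
  shows "(\<Sum>a\<in>exps_deg s (Suc d). if 1 \<le> a i then h (a(i := a i - 1)) * (\<Prod>j<s. x j ^ a j) else 0)
       = x i * (\<Sum>b\<in>exps_deg s d. h b * (\<Prod>j<s. x j ^ b j))"
proof -
  have "(\<Sum>a\<in>exps_deg s (Suc d). if 1 \<le> a i then h (a(i := a i - 1)) * (\<Prod>j<s. x j ^ a j) else 0)
      = (\<Sum>a\<in>{a\<in>exps_deg s (Suc d). 1 \<le> a i}. h (a(i := a i - 1)) * (\<Prod>j<s. x j ^ a j))"
    by (rule sum.inter_filter[OF finite_exps_deg, symmetric])
  also have "\<dots> = (\<Sum>b\<in>exps_deg s d. x i * (h b * (\<Prod>j<s. x j ^ b j)))"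
  proof (rule sum.reindex_bij_witness[where i="\<lambda>b. b(i := Suc (b i))" and j="\<lambda>a. a(i := a i - 1)"])
    fix a assume a: "a \<in> {a\<in>exps_deg s (Suc d). 1 \<le> a i}"
    then show "(a(i := a i - 1))(i := Suc ((a(i := a i - 1)) i)) = a"
      by auto
    show "a(i := a i - 1) \<in> exps_deg s d"
      using a assms exps_deg_decrement_iff[of i s a d] by simp
    have "x i ^ a i = x i * x i ^ (a i - 1)"
      using a by (simp add: power_eq_if)
    then have "(\<Prod>j<s. x j ^ a j) = x i * (\<Prod>j<s. x j ^ (a(i := a i - 1)) j)"
      using assms by (simp add: prod.remove[of "{..<s}" i] mult.assoc)
    then show "x i * (h (a(i := a i - 1)) * (\<Prod>j<s. x j ^ (a(i := a i - 1)) j))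
        = h (a(i := a i - 1)) * (\<Prod>j<s. x j ^ a j)"
      by (simp add: mult_ac)
  next
    fix b assume b: "b \<in> exps_deg s d"
    show "(b(i := Suc (b i)))(i := (b(i := Suc (b i))) i - 1) = b"
      by auto
    show "b(i := Suc (b i)) \<in> {a\<in>exps_deg s (Suc d). 1 \<le> a i}"
      using exps_deg_decrement_iff[of i s "b(i := Suc (b i))" d] b assms by simp
  qed
  also have "\<dots> = x i * (\<Sum>b\<in>exps_deg s d. h b * (\<Prod>j<s. x j ^ b j))"
    by (simp add: sum_distrib_left)
  finally show ?thesis .
qed

lemma peval_lin_form_mult:
  "peval s (Suc d) (lin_form_mult s L c) x = lin_form s L x * peval s d c x"
proof -
  have "peval s (Suc d) (lin_form_mult s L c) x =
     (\<Sum>i<s. \<Sum>a\<in>exps_deg s (Suc d).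
        if 1 \<le> a i then L i * c (a(i := a i - 1)) * (\<Prod>j<s. x j ^ a j) else 0)"
    unfolding peval_def lin_form_mult_def sum_distrib_right
    by (subst sum.swap) (intro sum.cong refl, simp)
  also have "\<dots> = (\<Sum>i<s. L i * x i * peval s d c x)"
  proof (rule sum.cong[OF refl])
    fix i assume "i \<in> {..<s}"
    then show "(\<Sum>a\<in>exps_deg s (Suc d).
        if 1 \<le> a i then L i * c (a(i := a i - 1)) * (\<Prod>j<s. x j ^ a j) else 0)
      = L i * x i * peval s d c x"
      using sum_exps_deg_Suc_shift[where h="\<lambda>b. L i * c b" and x=x and d=d]
      by (simp add: peval_def sum_distrib_left mult_ac)
  qed
  finally show ?thesis
    by (simp add: lin_form_def sum_distrib_right)
qed

definition form_funs :: "nat \<Rightarrow> nat \<Rightarrow> ((nat \<Rightarrow> 'a::field) \<Rightarrow> 'a) set" where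
  "form_funs s n = peval s n ` hpolys s n"

lemma one_in_form_funs: "(\<lambda>x. 1) \<in> form_funs s 0"
proof -
  define one :: "(nat \<Rightarrow> nat) \<Rightarrow> 'a" where "one a = (if a = (\<lambda>_. 0) then 1 else 0)" for a
  have "one \<in> hpolys s 0" "peval s 0 one = (\<lambda>x. 1)"
    by (auto simp: one_def hpolys_def peval_def exps_deg_0)
  then show ?thesis
    unfolding form_funs_def by (metis image_eqI)
qed

lemma form_funs_mult_lin_form:
  assumes "\<phi> \<in> form_funs s n"
  shows "(\<lambda>x. lin_form s L x * \<phi> x) \<in> form_funs s (Suc n)"
proof -
  obtain c where "c \<in> hpolys s n" "\<phi> = peval s n c"
    using assms by (auto simp: form_funs_def)
  then show ?thesis
    unfolding form_funs_def
    by (intro image_eqI[of _ _ "lin_form_mult s L c"]) (auto simp: peval_lin_form_mult lin_form_mult_hpolys)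
qed

definition diff_form :: "nat \<Rightarrow> 'a \<Rightarrow> nat \<Rightarrow> nat \<Rightarrow> 'a::field" where
  "diff_form a c b = (\<lambda>i. (if i = a then 1 else 0) - c * (if i = b then 1 else 0))"

lemma lin_form_diff_form:
  assumes "a < s" "b < s"
  shows "lin_form s (diff_form a c b) x = x a - c * x b"
proof -
  have "lin_form s (diff_form a c b) x = (\<Sum>i<s. (if i = a then x i else 0) - c * (if i = b then x i else 0))"
    unfolding lin_form_def diff_form_def by (rule sum.cong) (auto simp: algebra_simps)
  also have "\<dots> = x a - c * x b"
    using assms by (simp add: sum_subtractf sum_distrib_left[symmetric] sum.delta)
  finally show ?thesis .
qed

lemma form_funs_mult_prod_diffs:
  assumes "\<phi> \<in> form_funs s n" "finite S" "\<And>j. j \<in> S \<Longrightarrow> a j < s \<and> b j < s"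
  shows "(\<lambda>x. (\<Prod>j\<in>S. x (a j) - c j * x (b j)) * \<phi> x) \<in> form_funs s (n + card S)"
  using assms(2,3)
proof (induction S rule: finite_induct)
  case empty
  then show ?case using assms(1) by simp
next
  case (insert i S)
  then have "(\<lambda>x. lin_form s (diff_form (a i) (c i) (b i)) x * ((\<Prod>j\<in>S. x (a j) - c j * x (b j)) * \<phi> x))
      \<in> form_funs s (Suc (n + card S))"
    by (intro form_funs_mult_lin_form) auto
  then show ?case
    using insert by (simp add: lin_form_diff_form mult.assoc)
qed

lemma var0_mult_form_fun_in_Lspace:
  assumes "0 < s" "\<phi> \<in> form_funs s n"
  obtains f where "f \<in> Lspace s (Suc n)" "\<And>x. peval s (Suc n) f x = x 0 * \<phi> x"
proof -
  obtain c where c: "c \<in> hpolys s n" "\<phi> = peval s n c"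
    using assms(2) by (auto simp: form_funs_def)
  have "lin_form_mult s (diff_form 0 0 0) c \<in> Lspace s (Suc n)"
    using c(1) by (rule lin_form_mult_Lspace) (simp add: diff_form_def)
  moreover have "peval s (Suc n) (lin_form_mult s (diff_form 0 0 0) c) x = x 0 * \<phi> x" for x
    using assms(1) c(2) by (simp add: peval_lin_form_mult lin_form_diff_form)
  ultimately show ?thesis
    using that by blast
qed

section \<open>Separating the points of a finite projective set by forms\<close>

lemma projpt_scale:
  assumes "c \<noteq> 0"
  shows "projpt (\<lambda>i. c * x i) = projpt x"
proof safe
  fix y assume "y \<in> projpt (\<lambda>i. c * x i)"
  then obtain k where "k \<noteq> 0" "y = (\<lambda>i. k * (c * x i))"
    by (auto simp: projpt_def)
  then show "y \<in> projpt x"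
    using assms unfolding projpt_def by (intro CollectI exI[of _ "k * c"]) (auto simp: mult.assoc)
next
  fix y assume "y \<in> projpt x"
  then obtain k where "k \<noteq> 0" "y = (\<lambda>i. k * x i)"
    by (auto simp: projpt_def)
  then show "y \<in> projpt (\<lambda>i. c * x i)"
    using assms unfolding projpt_def by (intro CollectI exI[of _ "k / c"]) auto
qed

lemma self_in_projpt: "x \<in> projpt x"
  unfolding projpt_def by (intro CollectI exI[of _ 1]) auto

lemma peval_vanishes_on_projpt_iff: "(\<forall>y\<in>projpt x. peval s d c y = 0) \<longleftrightarrow> peval s d c x = 0"
  using self_in_projpt[of x] by (auto simp: projpt_def peval_homogeneous)

definition normalized :: "nat \<Rightarrow> nat \<Rightarrow> (nat \<Rightarrow> 'a::field) \<Rightarrow> bool" where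
  "normalized s j p \<longleftrightarrow> j < s \<and> p j = 1 \<and> (\<forall>i<j. p i = 0) \<and> (\<forall>i\<ge>s. p i = 0)"

lemma normalized_rep_exists:
  assumes "x i \<noteq> 0" "i < s" "\<forall>i\<ge>s. x i = 0"
  obtains j p where "normalized s j p" "projpt p = projpt x"
proof -
  define j where "j = (LEAST i. x i \<noteq> 0)"
  have xj: "x j \<noteq> 0" "j \<le> i"
    unfolding j_def using assms(1) by (rule LeastI, rule Least_le)
  have below: "x i' = 0" if "i' < j" for i'
    using that not_less_Least unfolding j_def by blast
  have "normalized s j (\<lambda>i. (1 / x j) * x i)"
    using xj below assms(2,3) by (auto simp: normalized_def)
  moreover have "projpt (\<lambda>i. (1 / x j) * x i) = projpt x"
    using xj by (intro projpt_scale) simp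
  ultimately show ?thesis
    using that by blast
qed

lemma normalized_eqI:
  assumes "normalized s j p" "normalized s j x" "\<And>i. j < i \<Longrightarrow> i < s \<Longrightarrow> x i = p i"
  shows "x = p"
proof
  fix i show "x i = p i"
    using assms unfolding normalized_def by (cases "i < j"; cases "i = j"; cases "i < s") auto
qed

text \<open>On normalized points, the first factor vanishes exactly when the leading index exceeds j,
  the second when it is below j, and the third when the point differs from p after index j.\<close>
definition point_indicator :: "nat \<Rightarrow> nat \<Rightarrow> nat \<Rightarrow> (nat \<Rightarrow> 'a::{finite,field}) \<Rightarrow> (nat \<Rightarrow> 'a) \<Rightarrow> 'a" where
  "point_indicator s M j p x = x j ^ M *
     (\<Prod>ic\<in>{..<j} \<times> (UNIV - {0}). x j - snd ic * x (fst ic)) *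
     (\<Prod>ic\<in>Sigma {j<..<s} (\<lambda>i. UNIV - {p i}). x (fst ic) - snd ic * x j)"

lemma point_indicator_form_funs:
  fixes p :: "nat \<Rightarrow> 'a::{finite,field}"
  assumes "j < s" "(s - 1) * (CARD('a) - 1) < d"
  shows "point_indicator s (d - (s - 1) * (CARD('a) - 1)) j p \<in> form_funs s d"
proof -
  define M where "M = d - (s - 1) * (CARD('a) - 1)"
  define S2 where "S2 = {..<j} \<times> (UNIV - {0::'a})"
  define S3 where "S3 = Sigma {j<..<s} (\<lambda>i. UNIV - {p i})"
  have "(\<lambda>x. (\<Prod>ic\<in>S3. x (fst ic) - snd ic * x j) * 1) \<in> form_funs s (0 + card S3)"
    by (rule form_funs_mult_prod_diffs[OF one_in_form_funs]) (use assms(1) in \<open>auto simp: S3_def\<close>)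
  then have "(\<lambda>x. (\<Prod>ic\<in>S2. x j - snd ic * x (fst ic)) * ((\<Prod>ic\<in>S3. x (fst ic) - snd ic * x j) * 1))
      \<in> form_funs s (0 + card S3 + card S2)"
    by (rule form_funs_mult_prod_diffs) (use assms(1) in \<open>auto simp: S2_def\<close>)
  then have "(\<lambda>x. (\<Prod>m\<in>{..<M}. x j - 0 * x j) * ((\<Prod>ic\<in>S2. x j - snd ic * x (fst ic)) *
      ((\<Prod>ic\<in>S3. x (fst ic) - snd ic * x j) * 1))) \<in> form_funs s (0 + card S3 + card S2 + card {..<M})"
    by (rule form_funs_mult_prod_diffs) (use assms(1) in auto)
  moreover have "0 + card S3 + card S2 + card {..<M} = d"
  proof -
    have "card S3 + card S2 = (s - 1) * (CARD('a) - 1)"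
      using assms(1) by (simp add: S2_def S3_def card_SigmaI card_cartesian_product card_Diff_singleton
          add_mult_distrib[symmetric])
    then show ?thesis
      using assms(2) by (simp add: M_def)
  qed
  ultimately show ?thesis
    by (simp add: point_indicator_def[abs_def] M_def S2_def S3_def mult.assoc)
qed

lemma point_indicator_nonzero_iff:
  fixes p x :: "nat \<Rightarrow> 'a::{finite,field}"
  assumes p: "normalized s j p" and x: "normalized s j' x" and M: "1 \<le> M"
  shows "point_indicator s M j p x \<noteq> 0 \<longleftrightarrow> x = p"
proof
  assume "x = p"
  then show "point_indicator s M j p x \<noteq> 0"
    using p by (auto simp: point_indicator_def normalized_def prod_zero_iff)
next
  assume ne: "point_indicator s M j p x \<noteq> 0"
  then have xj: "x j \<noteq> 0"
    using M by (auto simp: point_indicator_def)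
  have "j' = j"
  proof (rule ccontr)
    assume "j' \<noteq> j"
    then have "j' < j"
      using x xj unfolding normalized_def by (metis linorder_neq_iff)
    then have "(\<Prod>ic\<in>{..<j} \<times> (UNIV - {0}). x j - snd ic * x (fst ic)) = 0"
      using xj x by (intro prod_zero bexI[of _ "(j', x j)"]) (auto simp: normalized_def)
    then show False
      using ne unfolding point_indicator_def by simp
  qed
  have "x i = p i" if "j < i" "i < s" for i
  proof (rule ccontr)
    assume "x i \<noteq> p i"
    then have "(\<Prod>ic\<in>Sigma {j<..<s} (\<lambda>i. UNIV - {p i}). x (fst ic) - snd ic * x j) = 0"
      using that x \<open>j' = j\<close> by (intro prod_zero bexI[of _ "(i, x i)"]) (auto simp: normalized_def)
    then show False
      using ne unfolding point_indicator_def by simp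
  qed
  then show "x = p"
    using normalized_eqI[OF p] x \<open>j' = j\<close> by blast
qed
section \<open>The Hilbert function of a finite set of projective points\<close>

context vector_space
begin

lemma linear_functional_sum:
  assumes "\<And>v w. f (v + w) = f v + f w" "\<And>c v. f (scale c v) = c * f v"
  shows "f (\<Sum>i\<in>J. scale (u i) (h i)) = (\<Sum>i\<in>J. u i * f (h i))"
proof -
  have "f 0 = 0"
    using assms(2)[of 0 0] by simp
  then show ?thesis
    by (induction J rule: infinite_finite_induct) (simp_all add: assms)
qed

lemma independent_Un_dual_family:
  fixes ev :: "'c \<Rightarrow> 'b \<Rightarrow> 'a"
  assumes B: "independent B" "\<And>v P. v \<in> B \<Longrightarrow> P \<in> X \<Longrightarrow> ev P v = 0"
    and ev_add: "\<And>P v w. ev P (v + w) = ev P v + ev P w"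
    and ev_scale: "\<And>P c v. ev P (scale c v) = c * ev P v"
    and dual: "\<And>P Q. P \<in> X \<Longrightarrow> Q \<in> X \<Longrightarrow> ev Q (g P) = (if Q = P then 1 else 0)"
  shows "independent (B \<union> g ` X)"
  unfolding independent_explicit_module
proof (intro allI impI)
  fix t u v
  assume t: "finite t" "t \<subseteq> B \<union> g ` X" "(\<Sum>v\<in>t. scale (u v) v) = 0" "v \<in> t"
  have u_dual: "u (g P) = 0" if P: "P \<in> X" "g P \<in> t" for P
  proof -
    have "ev P v = 0" if v: "v \<in> t - {g P}" for v
      using v t(2) B(2) P(1) dual by auto
    then have "(\<Sum>v\<in>t. u v * ev P v) = u (g P)"
      using t(1) P dual[OF P(1) P(1)] by (simp add: sum.remove)
    moreover have "(\<Sum>v\<in>t. u v * ev P v) = 0"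
      using linear_functional_sum[where f="ev P" and u=u and h=id and J=t, OF ev_add ev_scale] t(3) ev_scale[of P 0 0] by simp
    ultimately show ?thesis
      by simp
  qed
  have "(\<Sum>v\<in>t \<inter> B. scale (u v) v) = (\<Sum>v\<in>t. scale (u v) v)"
    by (rule sum.mono_neutral_left) (use t(1,2) u_dual in auto)
  then show "u v = 0"
    using independentD[OF B(1), of "t \<inter> B" u v] t u_dual by auto
qed

lemma subset_span_Un_dual_family:
  fixes ev :: "'c \<Rightarrow> 'b \<Rightarrow> 'a"
  assumes V: "subspace V" "{v \<in> V. \<forall>P\<in>X. ev P v = 0} \<subseteq> span B" and X: "finite X" "g ` X \<subseteq> V"
    and ev_add: "\<And>P v w. ev P (v + w) = ev P v + ev P w"
    and ev_scale: "\<And>P c v. ev P (scale c v) = c * ev P v"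
    and dual: "\<And>P Q. P \<in> X \<Longrightarrow> Q \<in> X \<Longrightarrow> ev Q (g P) = (if Q = P then 1 else 0)"
  shows "V \<subseteq> span (B \<union> g ` X)"
proof
  fix v assume v: "v \<in> V"
  define S where "S = (\<Sum>P\<in>X. scale (ev P v) (g P))"
  have S_V: "S \<in> V"
    unfolding S_def using V X by (intro subspace_sum subspace_scale) auto
  have "ev Q S = ev Q v" if Q: "Q \<in> X" for Q
  proof -
    have "ev Q S = (\<Sum>P\<in>X. ev P v * ev Q (g P))"
      unfolding S_def using linear_functional_sum[where f="ev Q" and u="\<lambda>P. ev P v" and h=g and J=X, OF ev_add ev_scale] .
    also have "\<dots> = ev Q v"
      using X Q dual by (simp add: if_distrib[of "\<lambda>z. _ * z"] sum.delta cong: if_cong)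
    finally show ?thesis .
  qed
  moreover have "ev Q (v - S) = ev Q v - ev Q S" for Q
    using ev_add[of Q "v - S" S] by simp
  ultimately have "v - S \<in> span B"
    using V subspace_diff[OF V(1) v S_V] by auto
  then have "v - S \<in> span (B \<union> g ` X)"
    using span_mono[of B "B \<union> g ` X"] by blast
  moreover have "S \<in> span (B \<union> g ` X)"
    unfolding S_def by (intro span_sum span_scale span_base) auto
  ultimately show "v \<in> span (B \<union> g ` X)"
    using span_add by fastforce
qed

text \<open>Rank-nullity for the evaluation map V \<rightarrow> K^X, which is onto because it admits a dual family g.\<close>
lemma dim_eq_dim_common_kernel_plus_card:
  fixes ev :: "'c \<Rightarrow> 'b \<Rightarrow> 'a"
  assumes V: "subspace V" "finite B" "V \<subseteq> span B" and X: "finite X" "g ` X \<subseteq> V"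
    and ev_add: "\<And>P v w. ev P (v + w) = ev P v + ev P w"
    and ev_scale: "\<And>P c v. ev P (scale c v) = c * ev P v"
    and dual: "\<And>P Q. P \<in> X \<Longrightarrow> Q \<in> X \<Longrightarrow> ev Q (g P) = (if Q = P then 1 else 0)"
  shows "dim V = dim {v \<in> V. \<forall>P\<in>X. ev P v = 0} + card X"
proof -
  define W where "W = {v \<in> V. \<forall>P\<in>X. ev P v = 0}"
  obtain BW where BW: "BW \<subseteq> W" "independent BW" "W \<subseteq> span BW" "card BW = dim W"
    using basis_exists by blast
  have "BW \<subseteq> span B"
    using BW(1) V(3) unfolding W_def by blast
  then have "finite BW"
    using independent_span_bound[OF V(2) BW(2)] by blast
  moreover have "BW \<inter> g ` X = {}"
    using BW(1) dual unfolding W_def by fastforce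
  moreover have "inj_on g X"
    by (rule inj_onI) (metis dual one_neq_zero)
  ultimately have "card (BW \<union> g ` X) = card BW + card X"
    using X(1) by (simp add: card_Un_disjoint card_image)
  moreover have "card (BW \<union> g ` X) = dim V"
  proof (rule basis_card_eq_dim)
    show "BW \<union> g ` X \<subseteq> V"
      using BW(1) X(2) unfolding W_def by blast
    show "V \<subseteq> span (BW \<union> g ` X)"
      using subset_span_Un_dual_family[OF V(1) _ X ev_add ev_scale dual] BW(3) unfolding W_def by blast
    show "independent (BW \<union> g ` X)"
      using independent_Un_dual_family[OF BW(2) _ ev_add ev_scale dual] BW(1) unfolding W_def by blast
  qed
  ultimately show ?thesis
    using BW(4) unfolding W_def by simp
qed

end

interpretation coeff_vs: vector_space "\<lambda>(c::'a::field) (f::(nat \<Rightarrow> nat) \<Rightarrow> 'a). \<lambda>a. c * f a"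
  by unfold_locales (simp_all add: fun_eq_iff algebra_simps)

lemma hpolys_subspace: "coeff_vs.subspace (hpolys s d)"
  unfolding coeff_vs.subspace_def hpolys_def by auto

lemma hpolys_subset_span_monomials:
  "hpolys s d \<subseteq> coeff_vs.span ((\<lambda>a b. if b = a then (1::'a::field) else 0) ` exps_deg s d)"
proof
  fix c :: "(nat \<Rightarrow> nat) \<Rightarrow> 'a" assume c: "c \<in> hpolys s d"
  have "c = (\<Sum>a\<in>exps_deg s d. (\<lambda>b. c a * (if b = a then 1 else 0)))"
  proof
    fix b
    have sum_apply: "(\<Sum>a\<in>A. F a) b = (\<Sum>a\<in>A. F a b)"
      for A and F :: "(nat \<Rightarrow> nat) \<Rightarrow> (nat \<Rightarrow> nat) \<Rightarrow> 'a"
      by (induction A rule: infinite_finite_induct) auto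
    show "c b = (\<Sum>a\<in>exps_deg s d. (\<lambda>b. c a * (if b = a then 1 else 0))) b"
      unfolding sum_apply using c finite_exps_deg[of s d]
      by (auto simp: hpolys_def if_distrib sum.delta cong: if_cong)
  qed
  also have "\<dots> \<in> coeff_vs.span ((\<lambda>a b. if b = a then (1::'a) else 0) ` exps_deg s d)"
    by (intro coeff_vs.span_sum coeff_vs.span_scale coeff_vs.span_base) auto
  finally show "c \<in> coeff_vs.span ((\<lambda>a b. if b = a then (1::'a) else 0) ` exps_deg s d)" .
qed

lemma point_indicator_dual_family:
  fixes X :: "(nat \<Rightarrow> 'a::{finite,field}) set set"
  assumes X: "\<And>P. P \<in> X \<Longrightarrow> \<exists>x. P = projpt x \<and> (\<forall>i\<ge>s. x i = 0) \<and> (\<exists>i<s. x i \<noteq> 0)"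
    and d: "(s - 1) * (CARD('a) - 1) < d"
  obtains rep g where "\<And>P. P \<in> X \<Longrightarrow> P = projpt (rep P)" "g ` X \<subseteq> hpolys s d"
    "\<And>P Q. P \<in> X \<Longrightarrow> Q \<in> X \<Longrightarrow> peval s d (g P) (rep Q) = (if Q = P then 1 else 0)"
proof -
  have "\<exists>p j. P = projpt p \<and> normalized s j p" if "P \<in> X" for P
    using X[OF that] normalized_rep_exists by metis
  then obtain rep j where rep: "\<And>P. P \<in> X \<Longrightarrow> P = projpt (rep P) \<and> normalized s (j P) (rep P)"
    by metis
  define M where "M = d - (s - 1) * (CARD('a) - 1)"
  define ind where "ind P = point_indicator s M (j P) (rep P)" for P
  have "\<exists>c\<in>hpolys s d. ind P = peval s d c" if "P \<in> X" for P
    using point_indicator_form_funs[OF _ d] rep[OF that]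
    unfolding ind_def M_def form_funs_def normalized_def by blast
  then obtain c where c: "\<And>P. P \<in> X \<Longrightarrow> c P \<in> hpolys s d \<and> ind P = peval s d (c P)"
    by metis
  have ind: "ind P (rep Q) \<noteq> 0 \<longleftrightarrow> Q = P" if "P \<in> X" "Q \<in> X" for P Q
  proof -
    have "rep Q = rep P \<longleftrightarrow> Q = P"
      using rep[OF that(1)] rep[OF that(2)] by metis
    then show ?thesis
      using point_indicator_nonzero_iff[of s "j P" "rep P" "j Q" "rep Q" M] rep that d
      unfolding ind_def M_def by auto
  qed
  define g where "g P = (\<lambda>a. (1 / ind P (rep P)) * c P a)" for P
  have "g ` X \<subseteq> hpolys s d"
    using c by (auto simp: g_def hpolys_def)
  moreover have "peval s d (g P) (rep Q) = (if Q = P then 1 else 0)" if "P \<in> X" "Q \<in> X" for P Q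
  proof -
    have "peval s d (g P) (rep Q) = (1 / ind P (rep P)) * ind P (rep Q)"
      unfolding g_def peval_scale using c[OF that(1)] by simp
    then show ?thesis
      using ind[OF that] ind[OF that(1) that(1)] by auto
  qed
  ultimately show ?thesis
    using that rep by blast
qed

text \<open>Above degree (s - 1)(q - 1) the forms separate the points of X, so S_d/I(X)_d has dimension |X|.\<close>
lemma dim_hpolys_eq_dim_vanishing_plus_card:
  fixes X :: "(nat \<Rightarrow> 'a::{finite,field}) set set"
  assumes X: "finite X" "\<And>P. P \<in> X \<Longrightarrow> \<exists>x. P = projpt x \<and> (\<forall>i\<ge>s. x i = 0) \<and> (\<exists>i<s. x i \<noteq> 0)"
    and d: "(s - 1) * (CARD('a) - 1) < d"
  shows "coeff_vs.dim (hpolys s d :: ((nat \<Rightarrow> nat) \<Rightarrow> 'a) set)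
       = coeff_vs.dim (vanishing_ideal_hom s d X) + card X"
proof -
  obtain rep g where rep: "\<And>P. P \<in> X \<Longrightarrow> P = projpt (rep P)" and g: "g ` X \<subseteq> hpolys s d"
    and dual: "\<And>P Q. P \<in> X \<Longrightarrow> Q \<in> X \<Longrightarrow> peval s d (g P) (rep Q) = (if Q = P then 1 else 0)"
    using point_indicator_dual_family[OF X(2) d] by blast
  define ev where "ev P v = peval s d v (rep P)" for P v
  have "coeff_vs.dim (hpolys s d :: ((nat \<Rightarrow> nat) \<Rightarrow> 'a) set)
      = coeff_vs.dim {v \<in> hpolys s d. \<forall>P\<in>X. ev P v = 0} + card X"
  proof (rule coeff_vs.dim_eq_dim_common_kernel_plus_card[OF hpolys_subspace _ hpolys_subset_span_monomials X(1) g])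
    show "finite ((\<lambda>a b. if b = a then (1::'a) else 0) ` exps_deg s d)"
      by (simp add: finite_exps_deg)
    show "ev P (v + w) = ev P v + ev P w" for P v w
      using peval_add[of s d v w] by (simp add: ev_def plus_fun_def)
    show "ev P (\<lambda>a. k * v a) = k * ev P v" for P k v
      by (simp add: ev_def peval_scale)
  qed (simp add: ev_def dual)
  moreover have "vanishing_ideal_hom s d X = {v \<in> hpolys s d. \<forall>P\<in>X. ev P v = 0}"
  proof -
    have "(\<forall>x\<in>P. peval s d v x = 0) \<longleftrightarrow> ev P v = 0" if "P \<in> X" for P v
      using rep[OF that] peval_vanishes_on_projpt_iff[of "rep P" s d v] unfolding ev_def by metis
    then show ?thesis
      unfolding vanishing_ideal_hom_def by auto
  qed
  ultimately show ?thesis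
    by simp
qed

lemma eventually_const_div_power_tendsto_0:
  assumes "eventually (\<lambda>d. H d = n) sequentially" "e \<noteq> 0"
  shows "(\<lambda>d. real (H d) / real d ^ e) \<longlonglongrightarrow> 0"
proof -
  have "filterlim (\<lambda>d. real d ^ e) at_top sequentially"
    using assms(2) by (intro filterlim_pow_at_top filterlim_real_sequentially) auto
  then have "(\<lambda>d. real n / real d ^ e) \<longlonglongrightarrow> 0"
    by (intro tendsto_divide_0[OF tendsto_const] filterlim_at_top_imp_at_infinity)
  moreover have eq: "eventually (\<lambda>d. real (H d) / real d ^ e = real n / real d ^ e) sequentially"
    using assms(1) by (rule eventually_mono) auto
  ultimately show ?thesis
    using tendsto_cong[OF eq] by blast
qed

lemma hdeg_eventually_const:
  assumes ev: "eventually (\<lambda>d. H d = n) sequentially" and n: "n > 0"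
  shows "hdeg H = real n"
proof -
  have not_zero: "\<not> eventually (\<lambda>d. H d = 0) sequentially"
  proof
    assume "eventually (\<lambda>d. H d = 0) sequentially"
    with ev have "eventually (\<lambda>d. False) sequentially"
      by (rule eventually_elim2) (use n in auto)
    then show False
      by simp
  qed
  have lim0: "(\<lambda>d. real (H d) / real d ^ 0) \<longlonglongrightarrow> real n"
    by (rule tendsto_eventually) (use ev in \<open>auto elim: eventually_mono\<close>)
  have "(THE e. \<exists>L>0. (\<lambda>d. real (H d) / real d ^ e) \<longlonglongrightarrow> L) = 0"
  proof (rule the_equality)
    show "\<exists>L>0. (\<lambda>d. real (H d) / real d ^ 0) \<longlonglongrightarrow> L"
      using lim0 n by (intro exI[of _ "real n"]) auto
    show "e = 0" if "\<exists>L>0. (\<lambda>d. real (H d) / real d ^ e) \<longlonglongrightarrow> L" for e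
      using that eventually_const_div_power_tendsto_0[OF ev, of e] LIMSEQ_unique by fastforce
  qed
  moreover have "lim (\<lambda>d. real (H d) / real d ^ 0) = real n"
    using lim0 by (rule limI)
  ultimately show ?thesis
    unfolding hdeg_def using not_zero by (simp add: Let_def)
qed

lemma hdeg_hilbert_fn:
  fixes X :: "(nat \<Rightarrow> 'a::{finite,field}) set set"
  assumes "finite X" "X \<noteq> {}"
    and "\<And>P. P \<in> X \<Longrightarrow> \<exists>x. P = projpt x \<and> (\<forall>i\<ge>s. x i = 0) \<and> (\<exists>i<s. x i \<noteq> 0)"
  shows "hdeg (hilbert_fn s X) = card X"
proof (rule hdeg_eventually_const)
  show "eventually (\<lambda>d. hilbert_fn s X d = card X) sequentially"
  proof (rule eventually_sequentiallyI)
    fix d assume "Suc ((s - 1) * (CARD('a) - 1)) \<le> d"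
    then show "hilbert_fn s X d = card X"
      using dim_hpolys_eq_dim_vanishing_plus_card[OF assms(1,3), of d] by (simp add: hilbert_fn_def)
  qed
  show "0 < card X"
    using assms(1,2) by (simp add: card_gt_0_iff)
qed

section \<open>The footprint bound on a grid\<close>

text \<open>The minimum distance of the affine cartesian code of degree D on a grid with sorted side
  lengths: the degree is spent killing whole slabs along the shortest sides first.\<close>
fun min_nonzeros :: "nat \<Rightarrow> nat list \<Rightarrow> nat" where
  "min_nonzeros D [] = 1"
| "min_nonzeros D (n # ns) = (if D < n then (n - D) * prod_list ns else min_nonzeros (D - (n - 1)) ns)"

lemma diff_mult_le_mult_diff:
  fixes u w n :: nat
  assumes "u \<le> w" "w \<le> n"
  shows "(w - u) * n \<le> w * (n - u)"
proof -
  have "w * u \<le> u * n"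
    using assms(2) by (simp add: mult.commute)
  then have "w * n - u * n \<le> w * n - w * u"
    by (rule diff_le_mono2)
  then show ?thesis
    by (simp add: diff_mult_distrib diff_mult_distrib2)
qed

lemma prod_list_le_min_nonzeros:
  assumes "u < w" "\<forall>n\<in>set ns. w \<le> n"
  shows "(w - u) * prod_list ns \<le> w * min_nonzeros u ns"
proof (cases ns)
  case Nil
  then show ?thesis by simp
next
  case (Cons n ns')
  then have "u < n" "w \<le> n"
    using assms by auto
  then have "(w - u) * n * prod_list ns' \<le> w * (n - u) * prod_list ns'"
    using assms(1) by (intro mult_right_mono diff_mult_le_mult_diff) auto
  then show ?thesis
    using Cons \<open>u < n\<close> by (simp add: mult.assoc)
qed

lemma min_nonzeros_pos: "\<forall>n\<in>set ns. 1 \<le> n \<Longrightarrow> 0 < min_nonzeros D ns"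
proof (induction ns arbitrary: D)
  case (Cons n ns)
  have "0 < prod_list ns"
    using Cons.prems prod_list_zero_iff[of ns] by (auto simp: Suc_le_eq)
  then show ?case
    using Cons by (auto simp: Suc_le_eq)
qed simp

lemma min_nonzeros_budget_shift:
  assumes "sorted ns" "\<forall>n\<in>set ns. x \<le> n" "1 \<le> x" "x - 1 \<le> E"
  shows "min_nonzeros (E - (x - 1)) ns \<le> x * min_nonzeros E ns"
  using assms
proof (induction ns arbitrary: E)
  case Nil
  then show ?case by simp
next
  case (Cons n ns)
  have xn: "x \<le> n" and ns: "sorted ns" "\<forall>n'\<in>set ns. n \<le> n'"
    using Cons.prems by auto
  consider (small) "E < n" | (large) "n \<le> E - (x - 1)" | (mid) "n \<le> E" "E - (x - 1) < n"
    by linarith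
  then show ?case
  proof cases
    case small
    define a where "a = n - E - 1"
    have a: "n - E = Suc a"
      using small by (simp add: a_def)
    have "a \<le> x * a"
      using Cons.prems(3) by simp
    moreover have "x * (n - E) = x + x * a"
      using a by simp
    ultimately have "n - (E - (x - 1)) \<le> x * (n - E)"
      using a Cons.prems(3,4) by linarith
    then have "(n - (E - (x - 1))) * prod_list ns \<le> x * (n - E) * prod_list ns"
      by (rule mult_right_mono) simp
    moreover have "E - (x - 1) < n"
      using small by linarith
    ultimately show ?thesis
      using small by (simp add: mult.assoc)
  next
    case large
    have "E - (x - 1) - (n - 1) = E - (n - 1) - (x - 1)"
      by (simp add: diff_commute)
    moreover have "min_nonzeros (E - (n - 1) - (x - 1)) ns \<le> x * min_nonzeros (E - (n - 1)) ns"
      by (rule Cons.IH) (use ns xn Cons.prems(3) large in auto)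
    moreover have "\<not> E < n" "\<not> E - (x - 1) < n"
      using large by auto
    ultimately show ?thesis
      by simp
  next
    case mid
    define v where "v = E - (n - 1)"
    have v: "v < x" "n - (E - (x - 1)) = x - v"
      using mid Cons.prems(4) xn by (auto simp: v_def)
    then have "min_nonzeros (E - (x - 1)) (n # ns) = (x - v) * prod_list ns"
      by (simp only: min_nonzeros.simps(2) mid(2) if_True)
    also have "\<dots> \<le> x * min_nonzeros v ns"
      using v(1) ns(2) xn by (intro prod_list_le_min_nonzeros) auto
    also have "\<dots> = x * min_nonzeros E (n # ns)"
      using mid(1) by (simp add: v_def)
    finally show ?thesis .
  qed
qed

lemma min_nonzeros_Cons_le:
  assumes "sorted (n # ns)" "e \<le> D" "e < n"
  shows "min_nonzeros D (n # ns) \<le> (n - e) * min_nonzeros (D - e) ns"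
proof (cases "D < n")
  case True
  then have "min_nonzeros D (n # ns) = (n - e - (D - e)) * prod_list ns"
    using assms(2) by simp
  also have "\<dots> \<le> (n - e) * min_nonzeros (D - e) ns"
    using True assms by (intro prod_list_le_min_nonzeros) auto
  finally show ?thesis .
next
  case False
  have "min_nonzeros (D - e - (n - e - 1)) ns \<le> (n - e) * min_nonzeros (D - e) ns"
  proof (rule min_nonzeros_budget_shift)
    show "sorted ns" "\<forall>n'\<in>set ns. n - e \<le> n'"
      using assms(1) by auto
  qed (use assms False in auto)
  moreover have "D - e - (n - e - 1) = D - (n - 1)"
    using assms False by auto
  ultimately show ?thesis
    using False by simp
qed

lemma min_nonzeros_Cons_exhausted:
  assumes "1 \<le> n" "n - 1 \<le> D" "\<forall>n'\<in>set ns. 1 \<le> n'"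
  shows "min_nonzeros D (n # ns) = min_nonzeros (D - (n - 1)) ns"
proof (cases "D < n")
  case True
  then have "D = n - 1"
    using assms(2) by simp
  then show ?thesis
    using assms(1,3) True by (cases ns) auto
qed simp

lemma min_nonzeros_closed_form:
  assumes "\<And>i. m \<le> i \<Longrightarrow> i < s \<Longrightarrow> 1 \<le> f i" "m + j < s" "r < f (m + j)"
    and "D = (\<Sum>i\<in>{m..<m + j}. f i - 1) + r"
  shows "min_nonzeros D (map f [m..<s]) = (f (m + j) - r) * (\<Prod>i\<in>{m + j + 1..<s}. f i)"
  using assms
proof (induction j arbitrary: m D)
  case 0
  then have "[m..<s] = m # [Suc m..<s]"
    by (simp add: upt_conv_Cons)
  then show ?case
    using 0 by (simp add: prod.distinct_set_conv_list[symmetric])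
next
  case (Suc j)
  have up: "[m..<s] = m # [Suc m..<s]"
    using Suc.prems by (simp add: upt_conv_Cons)
  have split: "(\<Sum>i\<in>{m..<m + Suc j}. f i - 1) = (f m - 1) + (\<Sum>i\<in>{Suc m..<Suc m + j}. f i - 1)"
    by (simp add: sum.atLeast_Suc_lessThan)
  have "min_nonzeros D (map f [m..<s]) = min_nonzeros (D - (f m - 1)) (map f [Suc m..<s])"
    unfolding up list.map(2) using Suc.prems split by (intro min_nonzeros_Cons_exhausted) auto
  also have "\<dots> = (f (Suc m + j) - r) * (\<Prod>i\<in>{Suc m + j + 1..<s}. f i)"
  proof (rule Suc.IH)
    show "D - (f m - 1) = (\<Sum>i\<in>{Suc m..<Suc m + j}. f i - 1) + r"
      using Suc.prems(4) split by simp
  qed (use Suc.prems in auto)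
  finally show ?case
    by simp
qed

lemma min_nonzeros_at_degree:
  assumes "\<And>i. 1 \<le> i \<Longrightarrow> i < s \<Longrightarrow> 1 \<le> f i" "k + 1 < s" "1 \<le> l" "l \<le> f (k + 1)"
    and "d = (\<Sum>i\<in>{1..k}. f i - 1) + l"
  shows "min_nonzeros (d - 1) (map f [1..<s]) = (f (k + 1) - (l - 1)) * (\<Prod>i\<in>{k + 2..<s}. f i)"
proof -
  have "min_nonzeros (d - 1) (map f [1..<s]) = (f (1 + k) - (l - 1)) * (\<Prod>i\<in>{1 + k + 1..<s}. f i)"
  proof (rule min_nonzeros_closed_form)
    show "d - 1 = (\<Sum>i\<in>{1..<1 + k}. f i - 1) + (l - 1)"
      using assms(3,5) by (simp add: atLeastLessThanSuc_atLeastAtMost)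
  qed (use assms(1-4) in auto)
  then show ?thesis
    by (simp add: add.commute)
qed

lemma poly_eq_sum_below:
  fixes q :: "'a::field poly"
  assumes "\<forall>j\<ge>N. coeff q j = 0"
  shows "poly q x = (\<Sum>j<N. coeff q j * x ^ j)"
proof -
  let ?M = "max N (Suc (degree q))"
  have "poly q x = (\<Sum>j<Suc (degree q). coeff q j * x ^ j)"
    by (simp add: poly_altdef lessThan_Suc_atMost)
  also have "\<dots> = (\<Sum>j<?M. coeff q j * x ^ j)"
    by (rule sum.mono_neutral_left) (auto simp: coeff_eq_0)
  also have "\<dots> = (\<Sum>j<N. coeff q j * x ^ j)"
    by (rule sum.mono_neutral_right) (use assms in auto)
  finally show ?thesis .
qed

text \<open>Reduce t^k modulo the product of the t - c over c in C.\<close>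
lemma power_eq_low_degree_on_finite:
  fixes C :: "'a::field set"
  assumes "finite C"
  obtains R where "\<And>k j. k < j \<Longrightarrow> R k j = 0" "\<And>k x. x \<in> C \<Longrightarrow> x ^ k = (\<Sum>j<card C. R k j * x ^ j)"
proof -
  define p :: "'a poly" where "p = (\<Prod>a\<in>C. [:-a, 1:])"
  have p0: "p \<noteq> 0"
    unfolding p_def using assms by (simp add: prod_zero_iff)
  have dp: "degree p = card C"
    unfolding p_def by (subst degree_prod_sum_eq) auto
  define q where "q k = monom 1 k mod p" for k
  have q: "poly (q k) x = x ^ k" if x: "x \<in> C" for x k
  proof -
    have "poly p x = 0"
      unfolding p_def poly_prod using assms x by (simp add: prod_zero_iff)
    moreover have "monom 1 k = monom 1 k div p * p + q k"
      by (simp add: q_def)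
    then have "poly (monom 1 k) x = poly (monom 1 k div p) x * poly p x + poly (q k) x"
      by (metis poly_add poly_mult)
    ultimately show ?thesis
      by (simp add: poly_monom)
  qed
  have dq: "coeff (q k) j = 0" if "card C \<le> j" for k j
  proof (cases "q k = 0")
    case False
    then have "degree (q k) < card C"
      using degree_mod_less'[OF p0] dp by (simp add: q_def)
    then show ?thesis
      using that by (intro coeff_eq_0) auto
  qed simp
  define R where "R k j = (if j < card C then coeff (q k) j else 0)" for k j
  have "R k j = 0" if "k < j" for k j
  proof (cases "j < card C")
    case True
    then have "degree (monom (1::'a) k) < degree p"
      using that dp by (simp add: degree_monom_eq)
    then have "q k = monom 1 k"
      unfolding q_def by (rule mod_poly_less)
    then show ?thesis
      using that by (simp add: R_def coeff_monom)
  qed (simp add: R_def)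
  moreover have "x ^ k = (\<Sum>j<card C. R k j * x ^ j)" if "x \<in> C" for k x
    using q[OF that] poly_eq_sum_below[of "card C" "q k" x] dq by (simp add: R_def)
  ultimately show ?thesis
    using that by blast
qed

lemma card_nonzeros_poly_ge:
  fixes f :: "nat \<Rightarrow> 'a::field"
  assumes "finite C" "e < N" "f e \<noteq> 0" "\<And>j. e < j \<Longrightarrow> j < N \<Longrightarrow> f j = 0"
  shows "card C - e \<le> card {t\<in>C. (\<Sum>j<N. f j * t ^ j) \<noteq> 0}"
proof -
  have trunc: "(\<Sum>j<N. f j * t ^ j) = (\<Sum>j\<le>e. f j * t ^ j)" for t
    by (rule sum.mono_neutral_right) (use assms(2,4) in auto)
  define p where "p = (\<Sum>j\<le>e. monom (f j) j)"
  have cp: "coeff p i = (if i \<le> e then f i else 0)" for i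
    unfolding p_def by (simp add: coeff_sum coeff_monom)
  have p0: "p \<noteq> 0"
    using cp[of e] assms(3) by auto
  have pe: "poly p t = (\<Sum>j<N. f j * t ^ j)" for t
    unfolding p_def trunc by (simp add: poly_sum poly_monom)
  have "card {t\<in>C. poly p t = 0} \<le> card {t. poly p t = 0}"
    by (rule card_mono) (use poly_roots_finite[OF p0] in auto)
  also have "\<dots> \<le> degree p"
    by (rule card_poly_roots_bound[OF p0])
  also have "\<dots> \<le> e"
    by (rule degree_le) (auto simp: cp)
  finally have "card {t\<in>C. poly p t = 0} \<le> e" .
  moreover have "card C = card {t\<in>C. poly p t = 0} + card {t\<in>C. poly p t \<noteq> 0}"
    using assms(1) by (subst card_Un_disjoint[symmetric]) (auto intro: arg_cong[where f=card])
  ultimately show ?thesis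
    by (simp add: pe)
qed

definition poly_fun_deg_le :: "nat set \<Rightarrow> nat \<Rightarrow> ((nat \<Rightarrow> 'a::field) \<Rightarrow> 'a) \<Rightarrow> bool" where
  "poly_fun_deg_le I D \<phi> \<longleftrightarrow> (\<exists>S c. finite S \<and> (\<forall>a\<in>S. (\<Sum>i\<in>I. a i) \<le> D) \<and>
     (\<forall>y. \<phi> y = (\<Sum>a\<in>S. c a * (\<Prod>i\<in>I. y i ^ a i))))"

lemma poly_fun_deg_le_upd:
  assumes "poly_fun_deg_le I D \<phi>" "i \<notin> I"
  shows "\<phi> (y(i := t)) = \<phi> y"
proof -
  obtain S c where "\<forall>y. \<phi> y = (\<Sum>a\<in>S. c a * (\<Prod>i\<in>I. y i ^ a i))"
    using assms(1) unfolding poly_fun_deg_le_def by blast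
  moreover have "(\<Prod>i'\<in>I. (y(i := t)) i' ^ a i') = (\<Prod>i'\<in>I. y i' ^ a i')" for a
    by (rule prod.cong) (use assms(2) in auto)
  ultimately show ?thesis
    by simp
qed

text \<open>Expand in powers of y i0; as y i0 ranges over C, the exponents can be reduced below |C|
  without raising the degree in the remaining variables.\<close>
lemma poly_fun_deg_le_expand:
  fixes \<phi> :: "(nat \<Rightarrow> 'a::field) \<Rightarrow> 'a"
  assumes \<phi>: "poly_fun_deg_le (insert i0 I) D \<phi>" and i0: "i0 \<notin> I" "finite I" and C: "finite C"
  obtains F where "\<And>j. poly_fun_deg_le I (D - j) (F j)" "\<And>j y. D < j \<Longrightarrow> F j y = 0"
    "\<And>y. y i0 \<in> C \<Longrightarrow> \<phi> y = (\<Sum>j<card C. F j y * y i0 ^ j)"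
proof -
  obtain S c where S0: "finite S" "\<forall>a\<in>S. (\<Sum>i\<in>insert i0 I. a i) \<le> D"
    "\<forall>y. \<phi> y = (\<Sum>a\<in>S. c a * (\<Prod>i\<in>insert i0 I. y i ^ a i))"
    using \<phi> unfolding poly_fun_deg_le_def by blast
  have S: "finite S" "\<And>a. a \<in> S \<Longrightarrow> a i0 + (\<Sum>i\<in>I. a i) \<le> D"
    "\<And>y. \<phi> y = (\<Sum>a\<in>S. c a * (y i0 ^ a i0 * (\<Prod>i\<in>I. y i ^ a i)))"
    using S0 i0 by simp_all
  obtain R where R: "\<And>k j. k < j \<Longrightarrow> R k j = 0" "\<And>k x. x \<in> C \<Longrightarrow> x ^ k = (\<Sum>j<card C. R k j * x ^ j)"
    using power_eq_low_degree_on_finite[OF C] by blast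
  define F where "F j y = (\<Sum>a\<in>S. (c a * R (a i0) j) * (\<Prod>i\<in>I. y i ^ a i))" for j y
  have "poly_fun_deg_le I (D - j) (F j)" for j
  proof -
    have "F j y = (\<Sum>a\<in>{a\<in>S. j \<le> a i0}. (c a * R (a i0) j) * (\<Prod>i\<in>I. y i ^ a i))" for y
      unfolding F_def by (rule sum.mono_neutral_right) (use S(1) R(1) not_le in auto)
    moreover have "\<forall>a\<in>{a\<in>S. j \<le> a i0}. (\<Sum>i\<in>I. a i) \<le> D - j"
      using S(2) by fastforce
    ultimately show ?thesis
      unfolding poly_fun_deg_le_def using S(1)
      by (intro exI[of _ "{a\<in>S. j \<le> a i0}"] exI[of _ "\<lambda>a. c a * R (a i0) j"]) auto
  qed
  moreover have "F j y = 0" if "D < j" for j y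
    unfolding F_def by (rule sum.neutral) (use S(2) R(1) that in fastforce)
  moreover have "\<phi> y = (\<Sum>j<card C. F j y * y i0 ^ j)" if "y i0 \<in> C" for y
  proof -
    have "\<phi> y = (\<Sum>a\<in>S. c a * ((\<Sum>j<card C. R (a i0) j * y i0 ^ j) * (\<Prod>i\<in>I. y i ^ a i)))"
      unfolding S(3) by (intro sum.cong refl) (simp only: R(2)[OF that, symmetric])
    also have "\<dots> = (\<Sum>j<card C. \<Sum>a\<in>S. (c a * R (a i0) j) * (\<Prod>i\<in>I. y i ^ a i) * y i0 ^ j)"
      by (subst sum.swap) (simp add: sum_distrib_left sum_distrib_right mult_ac)
    also have "\<dots> = (\<Sum>j<card C. F j y * y i0 ^ j)"
      by (simp add: F_def sum_distrib_right)
    finally show ?thesis .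
  qed
  ultimately show ?thesis
    using that by blast
qed

definition grid :: "nat set \<Rightarrow> (nat \<Rightarrow> 'a::zero set) \<Rightarrow> (nat \<Rightarrow> 'a) set" where
  "grid I C = {y. (\<forall>i\<in>I. y i \<in> C i) \<and> (\<forall>i. i \<notin> I \<longrightarrow> y i = 0)}"

lemma bij_betw_grid_PiE: "bij_betw (\<lambda>y. restrict y I) (grid I C) (PiE I C)"
proof (rule bij_betw_byWitness[where f'="\<lambda>f i. if i \<in> I then f i else 0"])
  show "\<forall>a\<in>grid I C. (\<lambda>i. if i \<in> I then restrict a I i else 0) = a"
    by (auto simp: grid_def fun_eq_iff)
  show "\<forall>a'\<in>PiE I C. restrict (\<lambda>i. if i \<in> I then a' i else 0) I = a'"
    by (auto simp: PiE_def extensional_def fun_eq_iff)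
  show "(\<lambda>y. restrict y I) ` grid I C \<subseteq> PiE I C"
    by (auto simp: grid_def)
  show "(\<lambda>f i. if i \<in> I then f i else 0) ` PiE I C \<subseteq> grid I C"
    by (auto simp: grid_def)
qed

lemma card_grid: "finite I \<Longrightarrow> card (grid I C) = (\<Prod>i\<in>I. card (C i))"
  using bij_betw_same_card[OF bij_betw_grid_PiE] card_PiE by metis

lemma finite_grid: "finite I \<Longrightarrow> (\<And>i. i \<in> I \<Longrightarrow> finite (C i)) \<Longrightarrow> finite (grid I C)"
  using bij_betw_finite[OF bij_betw_grid_PiE] finite_PiE by metis

lemma grid_insert_upd:
  assumes "z \<in> grid I A" "t \<in> A m"
  shows "z(m := t) \<in> grid (insert m I) A"
  using assms by (auto simp: grid_def)

lemma card_nonzeros_grid_insert: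
  fixes \<phi> F :: "(nat \<Rightarrow> 'a::zero) \<Rightarrow> 'b::zero"
  assumes m: "m \<notin> I" and fin: "finite I" "\<And>i. i \<in> insert m I \<Longrightarrow> finite (A i)"
    and N: "\<And>z. z \<in> grid I A \<Longrightarrow> F z \<noteq> 0 \<Longrightarrow> N \<le> card {t\<in>A m. \<phi> (z(m := t)) \<noteq> 0}"
  shows "N * card {z\<in>grid I A. F z \<noteq> 0} \<le> card {y\<in>grid (insert m I) A. \<phi> y \<noteq> 0}"
proof -
  define Z where "Z = {z\<in>grid I A. F z \<noteq> 0}"
  define T where "T z = {t\<in>A m. \<phi> (z(m := t)) \<noteq> 0}" for z
  have finZ: "finite Z"
    unfolding Z_def using finite_grid[of I A] fin by auto
  have "inj_on (\<lambda>(z, t). z(m := t)) (Sigma Z T)"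
  proof (rule inj_onI, clarify)
    fix z t z' t' assume "z \<in> Z" "z' \<in> Z" and eq: "z(m := t) = z'(m := t')"
    then have "z m = 0" "z' m = 0"
      using m by (auto simp: Z_def grid_def)
    then show "z = z' \<and> t = t'"
      using eq by (metis fun_upd_triv fun_upd_upd fun_upd_same)
  qed
  moreover have "(\<lambda>(z, t). z(m := t)) ` Sigma Z T \<subseteq> {y\<in>grid (insert m I) A. \<phi> y \<noteq> 0}"
    by (auto simp: Z_def T_def intro: grid_insert_upd)
  moreover have "finite {y\<in>grid (insert m I) A. \<phi> y \<noteq> 0}"
    using finite_grid[of "insert m I" A] fin by auto
  ultimately have "card (Sigma Z T) \<le> card {y\<in>grid (insert m I) A. \<phi> y \<noteq> 0}"
    by (rule card_inj_on_le)
  moreover have "N * card Z \<le> card (Sigma Z T)"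
  proof -
    have "N * card Z \<le> (\<Sum>z\<in>Z. card (T z))"
      using N sum_bounded_below[of Z N "\<lambda>z. card (T z)"] by (simp add: Z_def T_def mult.commute)
    also have "\<dots> = card (Sigma Z T)"
      using finZ fin(2) by (simp add: T_def card_SigmaI)
    finally show ?thesis .
  qed
  ultimately show ?thesis
    by (simp add: Z_def)
qed

lemma poly_fun_deg_le_leading_slice:
  fixes \<phi> :: "(nat \<Rightarrow> 'a::field) \<Rightarrow> 'a"
  assumes \<phi>: "poly_fun_deg_le (insert m I) D \<phi>" and m: "m \<notin> I" "finite I" "finite (A m)"
    and nz: "\<exists>y\<in>grid (insert m I) A. \<phi> y \<noteq> 0"
  obtains e F where "e < card (A m)" "e \<le> D" "poly_fun_deg_le I (D - e) F" "\<exists>z\<in>grid I A. F z \<noteq> 0"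
    "\<And>z. z \<in> grid I A \<Longrightarrow> F z \<noteq> 0 \<Longrightarrow> card (A m) - e \<le> card {t\<in>A m. \<phi> (z(m := t)) \<noteq> 0}"
proof -
  obtain F where F: "\<And>j. poly_fun_deg_le I (D - j) (F j)" "\<And>j y. D < j \<Longrightarrow> F j y = 0"
    "\<And>y. y m \<in> A m \<Longrightarrow> \<phi> y = (\<Sum>j<card (A m). F j y * y m ^ j)"
    using poly_fun_deg_le_expand[OF \<phi> m] by blast
  have F_upd: "F j (y(m := t)) = F j y" for j y t
    using poly_fun_deg_le_upd[OF F(1) m(1)] .
  define J where "J = {j. j < card (A m) \<and> (\<exists>z\<in>grid I A. F j z \<noteq> 0)}"
  obtain y0 where y0: "y0 \<in> grid (insert m I) A" "\<phi> y0 \<noteq> 0"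
    using nz by blast
  have "y0 m \<in> A m"
    using y0(1) by (simp add: grid_def)
  then have "(\<Sum>j<card (A m). F j y0 * y0 m ^ j) \<noteq> 0"
    using y0(2) F(3)[of y0] by simp
  then obtain j0 where j0: "j0 \<in> {..<card (A m)}" "F j0 y0 * y0 m ^ j0 \<noteq> 0"
    using sum.not_neutral_contains_not_neutral by blast
  moreover have "y0(m := 0) \<in> grid I A"
    using y0(1) m(1) by (auto simp: grid_def)
  ultimately have "j0 \<in> J"
    unfolding J_def using F_upd[of j0 y0 0] by (auto intro!: bexI[of _ "y0(m := 0)"])
  define e where "e = Max J"
  have "finite J"
    unfolding J_def by auto
  then have "e \<in> J" and e_max: "\<And>j. j \<in> J \<Longrightarrow> j \<le> e"
    using \<open>j0 \<in> J\<close> unfolding e_def by (auto intro: Max_in)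
  then have e: "e < card (A m)" "\<exists>z\<in>grid I A. F e z \<noteq> 0"
    unfolding J_def by auto
  have "e \<le> D"
    using e(2) F(2)[of e] by (meson not_le)
  moreover have "card (A m) - e \<le> card {t\<in>A m. \<phi> (z(m := t)) \<noteq> 0}"
    if z: "z \<in> grid I A" "F e z \<noteq> 0" for z
  proof -
    have "{t\<in>A m. \<phi> (z(m := t)) \<noteq> 0} = {t\<in>A m. (\<Sum>j<card (A m). F j z * t ^ j) \<noteq> 0}"
      using F(3) F_upd by auto
    moreover have "F j z = 0" if "e < j" "j < card (A m)" for j
      using e_max[of j] that z(1) unfolding J_def by force
    ultimately show ?thesis
      using card_nonzeros_poly_ge[of "A m" e "card (A m)" "\<lambda>j. F j z"] m(3) e(1) z(2) by simp
  qed
  ultimately show ?thesis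
    using that[OF e(1) _ F(1) e(2)] by blast
qed

lemma min_nonzeros_le_card_nonzeros:
  fixes \<phi> :: "(nat \<Rightarrow> 'a::field) \<Rightarrow> 'a"
  assumes A: "\<And>i. m \<le> i \<Longrightarrow> i < s \<Longrightarrow> finite (A i)" and sorted: "sorted (map (\<lambda>i. card (A i)) [m..<s])"
    and \<phi>: "poly_fun_deg_le {m..<s} D \<phi>" and nz: "\<exists>y\<in>grid {m..<s} A. \<phi> y \<noteq> 0"
  shows "min_nonzeros D (map (\<lambda>i. card (A i)) [m..<s]) \<le> card {y\<in>grid {m..<s} A. \<phi> y \<noteq> 0}"
  using assms
proof (induction "s - m" arbitrary: m D \<phi>)
  case 0
  then have "{y\<in>grid {m..<s} A. \<phi> y \<noteq> 0} = {\<lambda>_. 0}"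
    by (auto simp: grid_def)
  then show ?case
    using 0 by simp
next
  case (Suc n)
  have ms: "m < s"
    using Suc.hyps(2) by simp
  have I: "{m..<s} = insert m {Suc m..<s}" "m \<notin> {Suc m..<s}"
    using ms by auto
  obtain e F where e: "e < card (A m)" "e \<le> D" and F: "poly_fun_deg_le {Suc m..<s} (D - e) F"
    "\<exists>z\<in>grid {Suc m..<s} A. F z \<noteq> 0"
    and slice: "\<And>z. z \<in> grid {Suc m..<s} A \<Longrightarrow> F z \<noteq> 0 \<Longrightarrow>
      card (A m) - e \<le> card {t\<in>A m. \<phi> (z(m := t)) \<noteq> 0}"
    using poly_fun_deg_le_leading_slice[of m "{Suc m..<s}" D \<phi> A] Suc.prems(1,3,4) ms I by auto
  have up: "map (\<lambda>i. card (A i)) [m..<s] = card (A m) # map (\<lambda>i. card (A i)) [Suc m..<s]"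
    using ms by (simp add: upt_conv_Cons)
  have "min_nonzeros D (map (\<lambda>i. card (A i)) [m..<s])
      \<le> (card (A m) - e) * min_nonzeros (D - e) (map (\<lambda>i. card (A i)) [Suc m..<s])"
    unfolding up using e Suc.prems(2) up by (intro min_nonzeros_Cons_le) auto
  also have "\<dots> \<le> (card (A m) - e) * card {z\<in>grid {Suc m..<s} A. F z \<noteq> 0}"
    using Suc.hyps(1)[of "Suc m" "D - e" F] Suc.hyps(2) Suc.prems(1,2) F up by auto
  also have "\<dots> \<le> card {y\<in>grid {m..<s} A. \<phi> y \<noteq> 0}"
    unfolding I(1)
  proof (rule card_nonzeros_grid_insert[OF I(2)])
    show "finite (A i)" if "i \<in> insert m {Suc m..<s}" for i
      using Suc.prems(1) that ms by auto
  qed (use slice in auto)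
  finally show ?case .
qed

section \<open>Forms divisible by t_1 on a projective nested cartesian set\<close>

lemma lessThan_eq_insert_0: "0 < (s::nat) \<Longrightarrow> {..<s} = insert 0 {1..<s}"
  by auto

lemma Lspace_vanishes_if_var0_zero:
  assumes "f \<in> Lspace s d" "0 < s" "x 0 = 0"
  shows "peval s d f x = 0"
  unfolding peval_def
proof (rule sum.neutral, rule ballI)
  fix a assume "a \<in> exps_deg s d"
  show "f a * (\<Prod>i<s. x i ^ a i) = 0"
  proof (cases "f a = 0")
    case False
    then have "1 \<le> a 0"
      using assms(1) by (auto simp: Lspace_def)
    then have "(\<Prod>i<s. x i ^ a i) = 0"
      using assms(2,3) by (subst prod_zero_iff) auto
    then show ?thesis
      by simp
  qed simp
qed

lemma Lspace_dehomogenized_deg_le: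
  assumes f: "f \<in> Lspace s d" and s: "0 < s"
  shows "poly_fun_deg_le {1..<s} (d - 1) (\<lambda>y. peval s d f (y(0 := 1)))"
proof -
  define S where "S = {a\<in>exps_deg s d. f a \<noteq> 0}"
  have "(\<Prod>i<s. (y(0 := 1)) i ^ a i) = (\<Prod>i\<in>{1..<s}. y i ^ a i)" for y :: "nat \<Rightarrow> 'a" and a
    unfolding lessThan_eq_insert_0[OF s] by (simp add: prod.insert)
  then have "peval s d f (y(0 := 1)) = (\<Sum>a\<in>S. f a * (\<Prod>i\<in>{1..<s}. y i ^ a i))" for y
    unfolding peval_def S_def by (subst sum.mono_neutral_right[symmetric]) (auto simp: finite_exps_deg)
  moreover have "(\<Sum>i\<in>{1..<s}. a i) \<le> d - 1" if a: "a \<in> S" for a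
  proof -
    have "1 \<le> a 0"
      using a f by (auto simp: S_def Lspace_def)
    moreover have "a 0 + (\<Sum>i\<in>{1..<s}. a i) = d"
      using a unfolding S_def exps_deg_def lessThan_eq_insert_0[OF s] by simp
    ultimately show ?thesis
      by linarith
  qed
  ultimately show ?thesis
    unfolding poly_fun_deg_le_def by (intro exI[of _ S] exI[of _ f]) (auto simp: S_def finite_exps_deg)
qed

lemma finite_proj_cart: "finite (proj_cart s (A :: nat \<Rightarrow> 'a::{finite,field} set))"
proof -
  have "proj_cart s A \<subseteq> projpt ` grid {..<s} A"
    by (auto simp: proj_cart_def grid_def)
  moreover have "finite (grid {..<s} A)"
    by (rule finite_grid) auto
  ultimately show ?thesis
    using finite_subset by blast
qed

lemma inj_on_affine_chart: "inj_on (\<lambda>y. projpt (y(0 := 1))) (grid {1..<s} A)"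
proof (rule inj_onI)
  fix y y' assume y: "y \<in> grid {1..<s} A" "y' \<in> grid {1..<s} A"
    and eq: "projpt (y(0 := 1)) = projpt (y'(0 := 1))"
  have "y'(0 := 1) \<in> projpt (y(0 := 1))"
    using self_in_projpt[of "y'(0 := 1)"] eq by simp
  then obtain k where k: "y'(0 := 1) = (\<lambda>i. k * (y(0 := 1)) i)"
    unfolding projpt_def by blast
  then have "k = 1"
    by (metis fun_upd_same mult.right_neutral)
  then have "y'(0 := 1) = y(0 := 1)"
    using k by (simp add: fun_eq_iff)
  moreover have "y 0 = 0" "y' 0 = 0"
    using y by (auto simp: grid_def)
  ultimately show "y = y'"
    by (metis fun_upd_triv fun_upd_upd)
qed

lemma affine_chart_in_proj_cart:
  assumes "proj_nested s A" "0 < s" "y \<in> grid {1..<s} A"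
  shows "projpt (y(0 := 1)) \<in> proj_cart s A"
proof -
  have "1 \<in> A 0"
    using assms(1,2) by (auto simp: proj_nested_def)
  then show ?thesis
    using assms(2,3) unfolding proj_cart_def grid_def
    by (intro CollectI exI[of _ "y(0 := 1)"]) auto
qed

text \<open>The affine chart x_1 = 1 covers every point of [A_1 x ... x A_s] off the hyperplane x_1 = 0:
  by condition (ii) of nestedness, dividing such a point by x_1 keeps it inside the grid.\<close>
lemma proj_cart_off_chart:
  assumes nested: "proj_nested s A" and s: "0 < s"
    and P: "P \<in> proj_cart s A" "P \<notin> (\<lambda>y. projpt (y(0 := 1))) ` grid {1..<s} A" and x: "x \<in> P"
  shows "x 0 = 0"
proof -
  obtain p where p: "P = projpt p" "\<forall>i<s. p i \<in> A i" "\<forall>i\<ge>s. p i = 0"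
    using P(1) unfolding proj_cart_def by blast
  have "p 0 = 0"
  proof (rule ccontr)
    assume p0: "p 0 \<noteq> 0"
    define y where "y i = (if i \<in> {1..<s} then p i / p 0 else 0)" for i
    have div: "a / b \<in> A j" if "i < j" "j < s" "a \<in> A j" "b \<in> A i" "b \<noteq> 0" for i j a b
      using nested that unfolding proj_nested_def by blast
    have "p i / p 0 \<in> A i" if "i \<in> {1..<s}" for i
      using p(2) p0 s that by (intro div[of 0]) auto
    then have "y \<in> grid {1..<s} A"
      unfolding grid_def y_def by auto
    moreover have "y(0 := 1) = (\<lambda>i. (1 / p 0) * p i)"
      using p(3) p0 by (auto simp: y_def fun_eq_iff)
    then have "projpt (y(0 := 1)) = P"
      using p(1) projpt_scale[of "1 / p 0" p] p0 by simp
    ultimately show False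
      using P(2) by blast
  qed
  then show ?thesis
    using x p(1) by (auto simp: projpt_def)
qed

lemma proj_cart_diff_zero_set:
  assumes "proj_nested s A" "0 < s" "f \<in> Lspace s d"
  shows "proj_cart s A - zero_set s d (proj_cart s A) f
       = (\<lambda>y. projpt (y(0 := 1))) ` {y\<in>grid {1..<s} A. peval s d f (y(0 := 1)) \<noteq> 0}"
proof (intro equalityI subsetI)
  fix P assume P: "P \<in> proj_cart s A - zero_set s d (proj_cart s A) f"
  then obtain x where "x \<in> P" "peval s d f x \<noteq> 0"
    by (auto simp: zero_set_def)
  then obtain y where y: "y \<in> grid {1..<s} A" "P = projpt (y(0 := 1))"
    using proj_cart_off_chart[OF assms(1,2)] Lspace_vanishes_if_var0_zero[OF assms(3,2)] P by blast
  then have "peval s d f (y(0 := 1)) \<noteq> 0"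
    using P peval_vanishes_on_projpt_iff[of "y(0 := 1)" s d f] by (auto simp: zero_set_def)
  then show "P \<in> (\<lambda>y. projpt (y(0 := 1))) ` {y\<in>grid {1..<s} A. peval s d f (y(0 := 1)) \<noteq> 0}"
    using y by blast
next
  fix P assume "P \<in> (\<lambda>y. projpt (y(0 := 1))) ` {y\<in>grid {1..<s} A. peval s d f (y(0 := 1)) \<noteq> 0}"
  then obtain y where "y \<in> grid {1..<s} A" "peval s d f (y(0 := 1)) \<noteq> 0" "P = projpt (y(0 := 1))"
    by blast
  then show "P \<in> proj_cart s A - zero_set s d (proj_cart s A) f"
    using affine_chart_in_proj_cart[OF assms(1,2)] self_in_projpt[of "y(0 := 1)"]
    by (auto simp: zero_set_def)
qed

lemma card_zero_set_Lspace:
  fixes A :: "nat \<Rightarrow> 'a::{finite,field} set"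
  assumes "proj_nested s A" "0 < s" "f \<in> Lspace s d"
  shows "card (zero_set s d (proj_cart s A) f) + card {y\<in>grid {1..<s} A. peval s d f (y(0 := 1)) \<noteq> 0}
       = card (proj_cart s A)"
proof -
  have "card (proj_cart s A - zero_set s d (proj_cart s A) f)
      = card {y\<in>grid {1..<s} A. peval s d f (y(0 := 1)) \<noteq> 0}"
    unfolding proj_cart_diff_zero_set[OF assms]
    by (rule card_image) (rule inj_on_subset[OF inj_on_affine_chart], auto)
  moreover have "zero_set s d (proj_cart s A) f \<subseteq> proj_cart s A"
    by (auto simp: zero_set_def)
  ultimately show ?thesis
    using finite_proj_cart[of s A] card_Diff_subset[of "zero_set s d (proj_cart s A) f" "proj_cart s A"]
      card_mono[of "proj_cart s A" "zero_set s d (proj_cart s A) f"] finite_subset by fastforce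
qed

lemma Lspace_notin_vanishing_ideal_iff:
  assumes "proj_nested s A" "0 < s" "f \<in> Lspace s d"
  shows "f \<notin> vanishing_ideal_hom s d (proj_cart s A)
       \<longleftrightarrow> (\<exists>y\<in>grid {1..<s} A. peval s d f (y(0 := 1)) \<noteq> 0)"
proof -
  have "f \<notin> vanishing_ideal_hom s d (proj_cart s A)
      \<longleftrightarrow> proj_cart s A - zero_set s d (proj_cart s A) f \<noteq> {}"
    using assms(3) by (auto simp: vanishing_ideal_hom_def zero_set_def Lspace_def)
  then show ?thesis
    unfolding proj_cart_diff_zero_set[OF assms] by blast
qed

lemma Lspace_dehomogenized_prod_diffs:
  assumes "0 < s" "finite S" "fst ` S \<subseteq> {1..<s}"
  obtains f where "f \<in> Lspace s (Suc (card S))"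
    "\<And>y. peval s (Suc (card S)) f (y(0 := 1)) = (\<Prod>p\<in>S. y (fst p) - snd p)"
proof -
  have "(\<lambda>x. (\<Prod>p\<in>S. x (fst p) - snd p * x 0) * 1) \<in> form_funs s (0 + card S)"
    by (rule form_funs_mult_prod_diffs[OF one_in_form_funs assms(2)]) (use assms(1,3) in auto)
  then have "(\<lambda>x. \<Prod>p\<in>S. x (fst p) - snd p * x 0) \<in> form_funs s (card S)"
    by simp
  then obtain f where f: "f \<in> Lspace s (Suc (card S))"
    "\<And>x. peval s (Suc (card S)) f x = x 0 * (\<Prod>p\<in>S. x (fst p) - snd p * x 0)"
    using var0_mult_form_fun_in_Lspace[OF assms(1)] by blast
  have "peval s (Suc (card S)) f (y(0 := 1)) = (\<Prod>p\<in>S. y (fst p) - snd p)" for y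
    unfolding f(2) using assms(3) by (auto intro!: prod.cong)
  then show ?thesis
    using that f(1) by blast
qed

lemma nonzeros_prod_diffs_eq_grid:
  fixes A :: "nat \<Rightarrow> 'a::idom set"
  assumes "finite S" "fst ` S \<subseteq> I"
  shows "{y\<in>grid I A. (\<Prod>p\<in>S. y (fst p) - snd p) \<noteq> 0} = grid I (\<lambda>i. A i - {c. (i, c) \<in> S})"
proof (intro equalityI subsetI)
  fix y assume "y \<in> {y\<in>grid I A. (\<Prod>p\<in>S. y (fst p) - snd p) \<noteq> 0}"
  then have y: "y \<in> grid I A" and nz: "(\<Prod>p\<in>S. y (fst p) - snd p) \<noteq> 0"
    by auto
  have "(i, y i) \<notin> S" for i
  proof
    assume "(i, y i) \<in> S"
    then have "(\<Prod>p\<in>S. y (fst p) - snd p) = 0"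
      using assms(1) by (intro prod_zero bexI[of _ "(i, y i)"]) auto
    with nz show False
      by simp
  qed
  then show "y \<in> grid I (\<lambda>i. A i - {c. (i, c) \<in> S})"
    using y by (auto simp: grid_def)
next
  fix y assume y: "y \<in> grid I (\<lambda>i. A i - {c. (i, c) \<in> S})"
  have "y (fst p) \<noteq> snd p" if "p \<in> S" for p
  proof
    assume "y (fst p) = snd p"
    moreover have "y (fst p) \<in> A (fst p) - {c. (fst p, c) \<in> S}"
      using y that assms(2) by (auto simp: grid_def)
    ultimately show False
      using that by simp
  qed
  then show "y \<in> {y\<in>grid I A. (\<Prod>p\<in>S. y (fst p) - snd p) \<noteq> 0}"
    using y assms(1) by (auto simp: grid_def prod_zero_iff)
qed

lemma extremal_Lspace_poly:
  fixes A :: "nat \<Rightarrow> 'a::{finite,field} set"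
  assumes nested: "proj_nested s A" and k: "k + 1 < s" and l: "1 \<le> l" "l \<le> card (A (k + 1))"
    and d: "d = (\<Sum>i\<in>{1..k}. card (A i) - 1) + l"
  obtains f where "f \<in> Lspace s d"
    "card {y\<in>grid {1..<s} A. peval s d f (y(0 := 1)) \<noteq> 0}
       = (card (A (k + 1)) - (l - 1)) * (\<Prod>i\<in>{k + 2..<s}. card (A i))"
proof -
  have A0: "0 \<in> A i" if "i < s" for i
    using nested that by (auto simp: proj_nested_def)
  have "l - 1 \<le> card (A (k + 1))"
    using l(2) by simp
  then obtain B where B: "B \<subseteq> A (k + 1)" "card B = l - 1"
    by (rule obtain_subset_with_card_n)
  define S where "S = Sigma {1..k} (\<lambda>i. A i - {0}) \<union> {k + 1} \<times> B"
  have S: "finite S" "fst ` S \<subseteq> {1..<s}"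
    using k by (auto simp: S_def)
  have "card S = (\<Sum>i\<in>{1..k}. card (A i) - 1) + (l - 1)"
    unfolding S_def using A0 k B by (subst card_Un_disjoint) (auto simp: card_SigmaI card_cartesian_product)
  then have d_eq: "Suc (card S) = d"
    using d l(1) by simp
  obtain f where f: "f \<in> Lspace s d" "\<And>y. peval s d f (y(0 := 1)) = (\<Prod>p\<in>S. y (fst p) - snd p)"
    using Lspace_dehomogenized_prod_diffs[OF _ S] k unfolding d_eq by auto
  define C where "C i = A i - {c. (i, c) \<in> S}" for i
  have C: "C i = {0}" if "1 \<le> i" "i \<le> k" for i
    using A0[of i] that k by (auto simp: C_def S_def)
  have "card (grid {1..<s} C) = (\<Prod>i\<in>{1..<k + 1}. card (C i)) * (\<Prod>i\<in>{k + 1..<s}. card (C i))"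
    unfolding card_grid[OF finite_atLeastLessThan] using k by (intro prod.atLeastLessThan_concat[symmetric]) auto
  also have "(\<Prod>i\<in>{1..<k + 1}. card (C i)) = 1"
    using C by (intro prod.neutral) auto
  also have "(\<Prod>i\<in>{k + 1..<s}. card (C i)) = card (C (k + 1)) * (\<Prod>i\<in>{k + 2..<s}. card (C i))"
    using k by (subst prod.atLeast_Suc_lessThan) auto
  also have "(\<Prod>i\<in>{k + 2..<s}. card (C i)) = (\<Prod>i\<in>{k + 2..<s}. card (A i))"
    by (intro prod.cong) (auto simp: C_def S_def)
  also have "card (C (k + 1)) = card (A (k + 1)) - (l - 1)"
    using B by (simp add: C_def S_def card_Diff_subset finite_subset)
  finally show ?thesis
    using that f nonzeros_prod_diffs_eq_grid[OF S, of A] unfolding C_def by simp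
qed

lemma proj_nested_card_ge_1:
  fixes A :: "nat \<Rightarrow> 'a::{finite,field} set"
  assumes "proj_nested s A" "i < s"
  shows "1 \<le> card (A i)"
proof -
  have "A i \<noteq> {}"
    using assms by (auto simp: proj_nested_def)
  then show ?thesis
    by (simp add: Suc_le_eq card_gt_0_iff)
qed

lemma hdeg_hilbert_fn_proj_cart:
  fixes A :: "nat \<Rightarrow> 'a::{finite,field} set"
  assumes "proj_nested s A" "0 < s"
  shows "hdeg (hilbert_fn s (proj_cart s A)) = card (proj_cart s A)"
proof (rule hdeg_hilbert_fn[OF finite_proj_cart])
  have "projpt (\<lambda>i. if i = 0 then 1 else 0) \<in> proj_cart s A"
    using assms unfolding proj_cart_def proj_nested_def
    by (intro CollectI exI[of _ "\<lambda>i. if i = 0 then 1 else 0"]) auto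
  then show "proj_cart s A \<noteq> {}"
    by blast
qed (auto simp: proj_cart_def)

lemma Max_card_zero_set_Lspace:
  fixes A :: "nat \<Rightarrow> 'a::{finite,field} set" and s d :: nat and f0 :: "(nat \<Rightarrow> nat) \<Rightarrow> 'a"
  defines "X \<equiv> proj_cart s A" and "\<delta> \<equiv> min_nonzeros (d - 1) (map (\<lambda>i. card (A i)) [1..<s])"
  assumes nested: "proj_nested s A" and s: "0 < s" and f0: "f0 \<in> Lspace s d"
    and \<delta>: "card {y\<in>grid {1..<s} A. peval s d f0 (y(0 := 1)) \<noteq> 0} = \<delta>" "0 < \<delta>"
  shows "Max {card (zero_set s d X f) | f. f \<in> Lspace s d \<and> f \<notin> vanishing_ideal_hom s d X} = card X - \<delta>"
proof (rule Max_eqI)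
  have sorted: "sorted (map (\<lambda>i. card (A i)) [1..<s])"
    using nested by (auto simp: sorted_iff_nth_mono proj_nested_def)
  have upper: "card (zero_set s d X f) \<le> card X - \<delta>"
    if f: "f \<in> Lspace s d" "f \<notin> vanishing_ideal_hom s d X" for f
    using min_nonzeros_le_card_nonzeros[OF _ sorted Lspace_dehomogenized_deg_le[OF f(1) s]]
      Lspace_notin_vanishing_ideal_iff[OF nested s f(1)] card_zero_set_Lspace[OF nested s f(1)] f(2)
    unfolding X_def \<delta>_def by fastforce
  then have "{card (zero_set s d X f) | f. f \<in> Lspace s d \<and> f \<notin> vanishing_ideal_hom s d X} \<subseteq> {..card X}"
    by (force intro: order_trans[OF _ diff_le_self])
  then show "finite {card (zero_set s d X f) | f. f \<in> Lspace s d \<and> f \<notin> vanishing_ideal_hom s d X}"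
    using finite_subset by blast
  show "n \<le> card X - \<delta>" if "n \<in> {card (zero_set s d X f) | f. f \<in> Lspace s d \<and> f \<notin> vanishing_ideal_hom s d X}" for n
    using that upper by blast
  have "{y\<in>grid {1..<s} A. peval s d f0 (y(0 := 1)) \<noteq> 0} \<noteq> {}"
    using \<delta> by (metis card.empty less_irrefl)
  then have "f0 \<notin> vanishing_ideal_hom s d X"
    using Lspace_notin_vanishing_ideal_iff[OF nested s f0] unfolding X_def by blast
  moreover have "card (zero_set s d X f0) = card X - \<delta>"
    using card_zero_set_Lspace[OF nested s f0] \<delta>(1) unfolding X_def by simp
  ultimately show "card X - \<delta> \<in> {card (zero_set s d X f) | f. f \<in> Lspace s d \<and> f \<notin> vanishing_ideal_hom s d X}"
    using f0 by (intro CollectI exI[of _ f0]) auto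
qed

theorem corollary6p9:
  fixes A :: "nat \<Rightarrow> 'a::{finite,field} set" and s d k l :: nat
  assumes "proj_nested s A"
    and "1 \<le> d" and "d \<le> (\<Sum>i\<in>{1..<s}. card (A i) - 1)"
    and "k \<le> s - 2"
    and "d = (\<Sum>i\<in>{1..k}. card (A i) - 1) + l"
    and "1 \<le> l" and "l \<le> card (A (k + 1)) - 1"
  shows "real (Max {card (zero_set s d (proj_cart s A) f) | f.
                 f \<in> Lspace s d \<and> f \<notin> vanishing_ideal_hom s d (proj_cart s A)})
       = hdeg (hilbert_fn s (proj_cart s A))
         - real ((card (A (k + 1)) - l + 1) * (\<Prod>i\<in>{k + 2..<s}. card (A i)))"
proof -
  define \<delta> where "\<delta> = (card (A (k + 1)) - (l - 1)) * (\<Prod>i\<in>{k + 2..<s}. card (A i))"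
  have k: "k + 1 < s"
    using assms(2-4) by (cases "1 < s") auto
  have card_A: "\<And>i. i < s \<Longrightarrow> 1 \<le> card (A i)" and l: "l \<le> card (A (k + 1))"
    using proj_nested_card_ge_1[OF assms(1)] assms(7) by auto
  obtain f0 where f0: "f0 \<in> Lspace s d" "card {y\<in>grid {1..<s} A. peval s d f0 (y(0 := 1)) \<noteq> 0} = \<delta>"
    using extremal_Lspace_poly[OF assms(1) k assms(6) l assms(5)] unfolding \<delta>_def by blast
  have \<delta>: "min_nonzeros (d - 1) (map (\<lambda>i. card (A i)) [1..<s]) = \<delta>"
    unfolding \<delta>_def using card_A k assms(5,6) l by (intro min_nonzeros_at_degree) auto
  moreover have "0 < \<delta>"
    using min_nonzeros_pos[of "map (\<lambda>i. card (A i)) [1..<s]" "d - 1"] card_A \<delta> by simp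
  ultimately have "Max {card (zero_set s d (proj_cart s A) f) | f.
      f \<in> Lspace s d \<and> f \<notin> vanishing_ideal_hom s d (proj_cart s A)} = card (proj_cart s A) - \<delta>"
    using Max_card_zero_set_Lspace[OF assms(1) _ f0(1)] f0(2) k by simp
  moreover have "\<delta> \<le> card (proj_cart s A)"
    using card_zero_set_Lspace[OF assms(1) _ f0(1)] f0(2) k by simp
  moreover have "\<delta> = (card (A (k + 1)) - l + 1) * (\<Prod>i\<in>{k + 2..<s}. card (A i))"
    unfolding \<delta>_def using assms(6) l by (simp add: Suc_diff_le)
  ultimately show ?thesis
    using hdeg_hilbert_fn_proj_cart[OF assms(1)] k by (simp add: of_nat_diff)
qed

end
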